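(* For every integer $n\geq 2$, there is a binary tree with $n$ leaves, all at depth $\lceil \log n \rceil$, and at most $2n+\lceil \log n \rceil-2$ vertices.
   Context: A binary tree is a rooted tree in which every vertex has at most two children. The depth of a vertex is its distance from the root. $\log$ denotes the logarithm to base $2$. *)

theory Defs
  imports Complex_Main
begin

datatype rtree = V "rtree list"

fun binary :: "rtree \<Rightarrow> bool" where
  "binary (V ts) = (length ts \<le> 2 \<and> (\<forall>t\<in>set ts. binary t))"

fun num_vertices :: "rtree \<Rightarrow> nat" where
  "num_vertices (V ts) = 1 + sum_list (map num_vertices ts)"

fun leaf_depths :: "rtree \<Rightarrow> nat list" where
  "leaf_depths (V []) = [0]"
| "leaf_depths (V (t # ts)) = map Suc (concat (map leaf_depths (t # ts)))"

end

theory Submission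
  imports Defs "HOL-Library.Log_Nat"
begin

text \<open>Let \<open>d = \<lceil>log n\<rceil>\<close>, so \<open>2^(d-1) < n \<le> 2^d\<close>. Give the root two children: a complete
  binary tree of depth \<open>d - 1\<close> (\<open>2^(d-1)\<close> leaves, \<open>2^d - 1\<close> vertices) and a tree carrying the
  remaining \<open>n - 2^(d-1)\<close> leaves at depth \<open>d - 1\<close>, built the same way recursively, except that
  a single child suffices whenever the leaves fit below it. By induction on the depth, \<open>m \<le> 2^e\<close>
  leaves at depth \<open>e\<close> need at most \<open>2m + e - 1\<close> vertices; at the top the split is genuine,
  which saves one vertex and gives \<open>2n + d - 2\<close>.\<close>

fun complete_tree :: "nat \<Rightarrow> rtree" where
  "complete_tree 0 = V []"
| "complete_tree (Suc d) = V [complete_tree d, complete_tree d]"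

lemma binary_complete_tree: "binary (complete_tree d)"
  by (induction d) auto

lemma leaf_depths_complete_tree: "leaf_depths (complete_tree d) = replicate (2 ^ d) d"
  by (induction d) (auto simp: replicate_add [symmetric] mult_2)

lemma num_vertices_complete_tree: "num_vertices (complete_tree d) + 1 = 2 ^ Suc d"
  by (induction d) auto

lemma binary_tree_leaves_at_depth:
  assumes "0 < n" "n \<le> 2 ^ d"
  shows "\<exists>t. binary t \<and> leaf_depths t = replicate n d \<and> num_vertices t + 1 \<le> 2 * n + d"
  using assms
proof (induction d arbitrary: n)
  case 0
  then have "n = 1"
    by simp
  then show ?case
    by (intro exI [of _ "V []"]) auto
next
  case (Suc d)
  show ?case
  proof (cases "n \<le> 2 ^ d")
    case True
    with Suc obtain t where "binary t" "leaf_depths t = replicate n d"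
      "num_vertices t + 1 \<le> 2 * n + d"
      by blast
    then show ?thesis
      by (intro exI [of _ "V [t]"]) auto
  next
    case False
    with Suc.prems have "0 < n - 2 ^ d" "n - 2 ^ d \<le> 2 ^ d"
      by auto
    then obtain t where t: "binary t" "leaf_depths t = replicate (n - 2 ^ d) d"
      "num_vertices t + 1 \<le> 2 * (n - 2 ^ d) + d"
      using Suc.IH by blast
    have "leaf_depths (V [complete_tree d, t]) = replicate n (Suc d)"
      using False t(2) by (simp add: leaf_depths_complete_tree replicate_add [symmetric])
    with t False show ?thesis
      using num_vertices_complete_tree [of d]
      by (intro exI [of _ "V [complete_tree d, t]"]) (auto simp: binary_complete_tree)
  qed
qed

lemma binary_tree_leaves_at_depth_more_than_half:
  assumes "2 ^ d < 2 * n" "n \<le> 2 ^ d" "0 < d"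
  shows "\<exists>t. binary t \<and> leaf_depths t = replicate n d \<and> num_vertices t + 2 \<le> 2 * n + d"
proof -
  obtain d' where d: "d = Suc d'"
    using \<open>0 < d\<close> gr0_implies_Suc by blast
  with assms have "0 < n - 2 ^ d'" "n - 2 ^ d' \<le> 2 ^ d'"
    by auto
  then obtain t where t: "binary t" "leaf_depths t = replicate (n - 2 ^ d') d'"
    "num_vertices t + 1 \<le> 2 * (n - 2 ^ d') + d'"
    using binary_tree_leaves_at_depth by blast
  have "leaf_depths (V [complete_tree d', t]) = replicate n d"
    using assms t(2) d by (simp add: leaf_depths_complete_tree replicate_add [symmetric])
  with t assms d show ?thesis
    using num_vertices_complete_tree [of d']
    by (intro exI [of _ "V [complete_tree d', t]"]) (auto simp: binary_complete_tree)
qed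

theorem lemma2p1:
  fixes n :: nat
  assumes "n \<ge> 2"
  shows "\<exists>t. binary t
           \<and> length (leaf_depths t) = n
           \<and> (\<forall>d\<in>set (leaf_depths t). int d = \<lceil>log 2 (real n)\<rceil>)
           \<and> int (num_vertices t) \<le> 2 * int n + \<lceil>log 2 (real n)\<rceil> - 2"
proof -
  define d where "d = ceillog2 n"
  have "0 \<le> log 2 (real n)"
    using assms by simp
  then have "0 \<le> \<lceil>log 2 (real n)\<rceil>"
    by linarith
  then have ceiling_log: "\<lceil>log 2 (real n)\<rceil> = int d"
    using assms by (simp add: d_def ceillog2_def)
  have "0 < d"
    using assms ceillog2_ge_iff [of n 1] by (simp add: d_def)
  moreover have "n \<le> 2 ^ d" "2 ^ d < 2 * n"
    using assms by (simp_all add: d_def le_two_power_ceillog2 two_power_ceillog2_gt)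
  ultimately obtain t where "binary t" "leaf_depths t = replicate n d"
    "num_vertices t + 2 \<le> 2 * n + d"
    using binary_tree_leaves_at_depth_more_than_half by blast
  then show ?thesis
    by (intro exI [of _ t]) (auto simp: ceiling_log)
qed

end
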